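(* Let $N\ge1$, $T>0$, and consider the problem of minimizing $\int_0^T\mathbb V(t)\,dt$, $\mathbb V=\frac1N\sum_i\xi_i^2$, over $\alpha\in\mathcal U_{FS}$, where $\dot\xi_i=-\xi_i+(1-\alpha_i)\bar\xi$, $\bar\xi=\frac1N\sum_j\xi_j$, with initial datum satisfying $\bar\xi(0)>0$ and $\xi_1(0)\ge\dots\ge\xi_N(0)$. Let $J(t)=\{i\in\{1,\dots,N\}:\xi_i(t)=\max_j\xi_j(t)\}$. The control $\alpha$ given by $\alpha_i(t)=1/|J(t)|$ for $i\in J(t)$ and $\alpha_i(t)=0$ for $i\notin J(t)$ (with $\xi$ the corresponding trajectory) is optimal for this problem.
   Context: $\mathcal U_{FS}$ is the set of measurable $\alpha:[0,T]\to[0,1]^N$ with $\sum_i\alpha_i(t)=1$ for all $t$. $|J(t)|$ is the cardinality of $J(t)$. *)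

theory Defs
  imports "HOL-Analysis.Analysis"
begin

text \<open>Indices are 0..N-1. A control is a function alpha t i, a trajectory xi t i.\<close>

definition admissible_control :: "nat \<Rightarrow> real \<Rightarrow> (real \<Rightarrow> nat \<Rightarrow> real) \<Rightarrow> bool" where
  "admissible_control N T \<alpha> \<longleftrightarrow>
     (\<forall>i<N. (\<lambda>t. \<alpha> t i) measurable_on {0..T}) \<and>
     (\<forall>t\<in>{0..T}. (\<forall>i<N. 0 \<le> \<alpha> t i \<and> \<alpha> t i \<le> 1) \<and> (\<Sum>i<N. \<alpha> t i) = 1)"

definition mean_state :: "nat \<Rightarrow> (nat \<Rightarrow> real) \<Rightarrow> real" where
  "mean_state N x = (\<Sum>j<N. x j) / real N"

text \<open>xi is a (Caratheodory) solution on [0,T] of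
  xi_i' = - xi_i + (1 - alpha_i) * mean(xi), xi(0) = x0.\<close>
definition is_trajectory :: "nat \<Rightarrow> real \<Rightarrow> (nat \<Rightarrow> real) \<Rightarrow> (real \<Rightarrow> nat \<Rightarrow> real)
    \<Rightarrow> (real \<Rightarrow> nat \<Rightarrow> real) \<Rightarrow> bool" where
  "is_trajectory N T x0 \<alpha> \<xi> \<longleftrightarrow>
     (\<forall>i<N. \<xi> 0 i = x0 i \<and> continuous_on {0..T} (\<lambda>t. \<xi> t i) \<and>
        (\<forall>t\<in>{0..T}. ((\<lambda>s. - \<xi> s i + (1 - \<alpha> s i) * mean_state N (\<xi> s))
                        has_integral (\<xi> t i - \<xi> 0 i)) {0..t}))"

definition variance_cost :: "nat \<Rightarrow> real \<Rightarrow> (real \<Rightarrow> nat \<Rightarrow> real) \<Rightarrow> real" where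
  "variance_cost N T \<xi> = integral {0..T} (\<lambda>t. (\<Sum>i<N. (\<xi> t i)^2) / real N)"

definition max_set :: "nat \<Rightarrow> (nat \<Rightarrow> real) \<Rightarrow> nat set" where
  "max_set N x = {i. i < N \<and> x i = Max (x ` {..<N})}"

definition is_max_feedback :: "nat \<Rightarrow> real \<Rightarrow> (real \<Rightarrow> nat \<Rightarrow> real) \<Rightarrow> (real \<Rightarrow> nat \<Rightarrow> real) \<Rightarrow> bool" where
  "is_max_feedback N T \<alpha> \<xi> \<longleftrightarrow>
     (\<forall>t\<in>{0..T}. \<forall>i<N. \<alpha> t i =
        (if i \<in> max_set N (\<xi> t) then 1 / real (card (max_set N (\<xi> t))) else 0))"

definition is_optimal :: "nat \<Rightarrow> real \<Rightarrow> (nat \<Rightarrow> real) \<Rightarrow> (real \<Rightarrow> nat \<Rightarrow> real) \<Rightarrow> (real \<Rightarrow> nat \<Rightarrow> real) \<Rightarrow> bool" where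
  "is_optimal N T x0 \<alpha> \<xi> \<longleftrightarrow>
     admissible_control N T \<alpha> \<and> is_trajectory N T x0 \<alpha> \<xi> \<and>
     (\<forall>\<beta> \<eta>. admissible_control N T \<beta> \<and> is_trajectory N T x0 \<beta> \<eta> \<longrightarrow>
        variance_cost N T \<xi> \<le> variance_cost N T \<eta>)"

end

theory Submission
  imports Defs
begin

text \<open>The mean \<open>m\<close> of the state obeys \<open>m' = -m/N\<close> for every admissible control, so it is
  the same positive function for all competitors. Writing \<open>\<xi>\<close> for the max-feedback trajectory
  and \<open>\<eta>\<close> for any other one, fix a time \<open>t\<close> and put \<open>W(r) = \<Sum>\<^sub>i \<xi>\<^sub>i(t) (\<eta>\<^sub>i(r) - \<xi>\<^sub>i(r))\<close>.
  Then \<open>W' = -W + m (\<Sum>\<^sub>i \<xi>\<^sub>i(t) \<alpha>\<^sub>i - \<Sum>\<^sub>i \<xi>\<^sub>i(t) \<beta>\<^sub>i)\<close>. An index that is maximal at some time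
  stays maximal afterwards, so \<open>\<alpha>(r)\<close> only charges indices maximal at \<open>t\<close> and the bracket is
  \<open>max \<xi>(t) - \<Sum>\<^sub>i \<xi>\<^sub>i(t) \<beta>\<^sub>i \<ge> 0\<close>. Hence \<open>W(t) \<ge> 0\<close>, i.e. \<open>\<xi>(t)\<close> is no farther from the
  origin than \<open>\<eta>(t)\<close>, and integrating in \<open>t\<close> gives optimality.
  The max-feedback trajectory itself is built explicitly: while the top \<open>k\<close> components
  coincide they move together and the others relax towards a common level, until the
  next component joins the top block.\<close>

section \<open>Maximal components and the max feedback\<close>

lemma max_set_iff:
  assumes "N \<ge> 1"
  shows "i \<in> max_set N x \<longleftrightarrow> i < N \<and> (\<forall>j<N. x j \<le> x i)"
proof -
  have fin: "finite (x ` {..<N})" by auto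
  show ?thesis
  proof
    assume "i \<in> max_set N x"
    then have "i < N" "x i = Max (x ` {..<N})" by (auto simp: max_set_def)
    then show "i < N \<and> (\<forall>j<N. x j \<le> x i)" using fin by auto
  next
    assume h: "i < N \<and> (\<forall>j<N. x j \<le> x i)"
    then have "Max (x ` {..<N}) = x i" using fin by (intro Max_eqI) auto
    then show "i \<in> max_set N x" using h by (auto simp: max_set_def)
  qed
qed

lemma max_set_subset: "max_set N x \<subseteq> {..<N}"
  by (auto simp: max_set_def)

lemma finite_max_set: "finite (max_set N x)"
  using finite_subset[OF max_set_subset] by blast

lemma max_set_nonempty:
  assumes "N \<ge> 1"
  shows "max_set N x \<noteq> {}"
proof -
  have "x ` {..<N} \<noteq> {}" using assms by (auto simp: lessThan_empty_iff)
  then have "Max (x ` {..<N}) \<in> x ` {..<N}" by (intro Max_in) auto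
  then obtain i where "i < N" "x i = Max (x ` {..<N})" by auto
  then show ?thesis by (auto simp: max_set_def)
qed

definition max_feedback :: "nat \<Rightarrow> (nat \<Rightarrow> real) \<Rightarrow> nat \<Rightarrow> real" where
  "max_feedback N x i = (if i \<in> max_set N x then 1 / real (card (max_set N x)) else 0)"

lemma is_max_feedback_iff:
  "is_max_feedback N T \<alpha> \<xi> \<longleftrightarrow> (\<forall>t\<in>{0..T}. \<forall>i<N. \<alpha> t i = max_feedback N (\<xi> t) i)"
  by (simp add: is_max_feedback_def max_feedback_def)

lemma max_feedback_nonneg: "0 \<le> max_feedback N x i"
  by (simp add: max_feedback_def)

lemma max_feedback_le_1: "max_feedback N x i \<le> 1"
proof -
  have "card (max_set N x) \<ge> 1" if "i \<in> max_set N x"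
    using that finite_max_set by (metis One_nat_def Suc_leI card_gt_0_iff empty_iff)
  then show ?thesis by (auto simp: max_feedback_def divide_le_eq_1)
qed

lemma sum_max_feedback:
  assumes "N \<ge> 1"
  shows "(\<Sum>i<N. max_feedback N x i) = 1"
proof -
  let ?J = "max_set N x"
  have "(\<Sum>i<N. max_feedback N x i) = (\<Sum>i\<in>?J. 1 / real (card ?J))"
    unfolding max_feedback_def using max_set_subset
    by (simp add: sum.If_cases Int_absorb1 Int_commute)
  also have "\<dots> = 1" using finite_max_set max_set_nonempty[OF assms] by simp
  finally show ?thesis .
qed

section \<open>Scalar integral equations\<close>

lemma has_integral_interval_diff:
  fixes f :: "real \<Rightarrow> real"
  assumes "(f has_integral A) {c..r}" "(f has_integral B) {c..a}" "c \<le> a" "a \<le> r"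
  shows "(f has_integral (A - B)) {a..r}"
proof -
  have int: "f integrable_on {a..r}"
    using assms integrable_subinterval_real has_integral_integrable
    by (metis atLeastatMost_subset_iff order_refl)
  have "integral {c..a} f + integral {a..r} f = integral {c..r} f"
    using Henstock_Kurzweil_Integration.integral_combine[of c a r f] assms has_integral_integrable by blast
  then have "integral {a..r} f = A - B" using assms(1,2) by (simp add: integral_unique)
  then show ?thesis using int by (metis has_integral_integral)
qed

lemma last_point_in_closed:
  fixes a c :: real
  assumes "closed S" "a \<in> S" "a \<le> c" "c \<notin> S"
  obtains r where "a \<le> r" "r < c" "r \<in> S" "\<And>x. r < x \<Longrightarrow> x \<le> c \<Longrightarrow> x \<notin> S"
proof -
  let ?S = "S \<inter> {a..c}"
  have ne: "?S \<noteq> {}" using assms by auto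
  have bdd: "bdd_above ?S" by auto
  have in_S: "Sup ?S \<in> ?S" using closed_contains_Sup[OF ne bdd] assms by auto
  have ub: "x \<le> Sup ?S" if "x \<in> ?S" for x using cSup_upper[OF that bdd] .
  have "a \<le> Sup ?S" using ub assms by auto
  moreover have "Sup ?S < c" using in_S assms by (cases "Sup ?S = c") auto
  moreover have "x \<notin> S" if "Sup ?S < x" "x \<le> c" for x
    using ub[of x] that \<open>a \<le> Sup ?S\<close> by auto
  ultimately show ?thesis using that in_S by blast
qed

lemma first_zero:
  fixes D :: "real \<Rightarrow> real"
  assumes "continuous_on {a..c} D" "D a > 0" "D c \<le> 0" "a \<le> c"
  obtains \<tau> where "a < \<tau>" "\<tau> \<le> c" "D \<tau> = 0" "\<And>x. a \<le> x \<Longrightarrow> x < \<tau> \<Longrightarrow> D x > 0"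
proof -
  let ?S = "{a..c} \<inter> D -` {..0}"
  have cl: "closed ?S" using assms(1) by (intro continuous_closed_preimage) auto
  have ne: "?S \<noteq> {}" using assms by auto
  have bdd: "bdd_below ?S" by auto
  define \<tau> where "\<tau> = Inf ?S"
  have in_S: "\<tau> \<in> ?S" unfolding \<tau>_def using closed_contains_Inf[OF ne bdd cl] .
  have pos: "D x > 0" if "a \<le> x" "x < \<tau>" for x
    using cInf_lower[OF _ bdd, of x] that in_S by (force simp: \<tau>_def)
  have "a < \<tau>" using in_S assms(2) by (cases "\<tau> = a") auto
  have "D \<tau> = 0"
  proof (rule ccontr)
    assume "D \<tau> \<noteq> 0"
    then have "D \<tau> < 0" using in_S by auto
    moreover have "continuous_on {a..\<tau>} (\<lambda>x. - D x)"
      using assms(1) in_S by (auto intro!: continuous_intros elim: continuous_on_subset)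
    ultimately obtain z where "a \<le> z" "z \<le> \<tau>" "D z = 0"
      using IVT'[of "\<lambda>x. - D x" a 0 \<tau>] assms(2) \<open>a < \<tau>\<close> by auto
    then show False using pos[of z] \<open>D \<tau> < 0\<close> by (cases "z = \<tau>") auto
  qed
  then show ?thesis using that \<open>a < \<tau>\<close> in_S pos by auto
qed

text \<open>Past the last time at which \<open>f \<ge> 0\<close>, the equation gives \<open>f' \<ge> -f > 0\<close>, so \<open>f\<close> cannot
  have become negative.\<close>

lemma integral_equation_nonneg:
  fixes f p :: "real \<Rightarrow> real"
  assumes "a \<le> b" "continuous_on {a..b} f" "f a \<ge> 0"
    and I: "\<forall>r\<in>{a..b}. ((\<lambda>s. - f s + p s) has_integral (f r - f a)) {a..r}"
    and P: "\<forall>s\<in>{a<..b}. p s \<ge> 0"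
    and c: "c \<in> {a..b}"
  shows "f c \<ge> 0"
proof (rule ccontr)
  assume "\<not> f c \<ge> 0"
  then have "f c < 0" by simp
  let ?S = "{a..c} \<inter> f -` {0..}"
  have "continuous_on {a..c} f" using assms(2) c by (auto intro: continuous_on_subset)
  then have "closed ?S" by (intro continuous_closed_preimage) auto
  then obtain r where r: "a \<le> r" "r < c" "r \<in> ?S" "\<And>x. r < x \<Longrightarrow> x \<le> c \<Longrightarrow> x \<notin> ?S"
    using last_point_in_closed[of ?S a c] c assms(3) \<open>f c < 0\<close> by auto
  have neg: "f x < 0" if "r < x" "x \<le> c" for x using r(4)[OF that] that r(1) by auto
  have "((\<lambda>s. - f s + p s) has_integral (f c - f a)) {a..c}"
    and "((\<lambda>s. - f s + p s) has_integral (f r - f a)) {a..r}" using I c r by auto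
  from has_integral_interval_diff[OF this r(1)] r(2)
  have on_rc: "((\<lambda>s. - f s + p s) has_integral (f c - f r)) {r..c}" by simp
  have "((\<lambda>s. if s = r then 0 else - f s + p s) has_integral (f c - f r)) {r..c}"
    by (rule has_integral_spike_finite[OF _ _ on_rc, of "{r}"]) auto
  moreover have "0 \<le> (if s = r then 0 else - f s + p s)" if s: "s \<in> {r..c}" for s
  proof (cases "s = r")
    case False
    then have "r < s" "s \<le> c" "s \<in> {a<..b}" using s c r(1) by auto
    then show ?thesis using neg[of s] P by force
  qed simp
  ultimately have "0 \<le> f c - f r" by (rule has_integral_nonneg)
  then show False using r(3) \<open>f c < 0\<close> by auto
qed

lemma integral_equation_exp:
  fixes g :: "real \<Rightarrow> real"
  assumes cont: "continuous_on {a..b} g"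
    and I: "\<forall>r\<in>{a..b}. ((\<lambda>s. c * g s) has_integral (g r - g a)) {a..r}"
    and t: "t \<in> {a..b}"
  shows "g t = g a * exp (c * (t - a))"
proof -
  have cont': "continuous_on {a..b} (\<lambda>s. c * g s)" using cont by (intro continuous_intros)
  have dg: "(g has_real_derivative c * g x) (at x within {a..b})" if x: "x \<in> {a..b}" for x
  proof -
    have "((\<lambda>r. integral {a..r} (\<lambda>s. c * g s)) has_real_derivative c * g x)
        (at x within {a..b})"
      by (rule integral_has_real_derivative[OF cont' x])
    from DERIV_add[OF DERIV_const this]
    have "((\<lambda>r. g a + integral {a..r} (\<lambda>s. c * g s)) has_real_derivative c * g x)
        (at x within {a..b})"
      by (simp only: add_0_left)
    then show ?thesis
    proof (rule has_field_derivative_transform_within[where d=1])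
      show "g a + integral {a..y} (\<lambda>s. c * g s) = g y" if "y \<in> {a..b}" for y
        using integral_unique[of "\<lambda>s. c * g s" "g y - g a" "{a..y}"] I that by simp
    qed (use x in auto)
  qed
  have "((\<lambda>r. g r * exp (- c * (r - a))) has_real_derivative 0) (at x within {a..b})"
    if x: "x \<in> {a..b}" for x
  proof -
    have "((\<lambda>r. exp (- c * (r - a))) has_real_derivative exp (- c * (x - a)) * (- c))
        (at x within {a..b})"
      by (auto intro!: derivative_eq_intros)
    from DERIV_mult[OF dg[OF x] this] show ?thesis by (simp add: algebra_simps)
  qed
  then obtain k where k: "\<forall>x\<in>{a..b}. g x * exp (- c * (x - a)) = k"
    using has_field_derivative_zero_constant[OF convex_real_interval(5)] by blast
  have "g t * exp (- c * (t - a)) = g a" using k t by force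
  then have "g t * exp (- c * (t - a)) * exp (c * (t - a)) = g a * exp (c * (t - a))" by simp
  then show ?thesis by (simp add: mult.assoc flip: exp_add)
qed

section \<open>Trajectories and the mean\<close>

lemma trajectory_has_integral:
  assumes "is_trajectory N T x0 \<alpha> \<xi>" "i < N" "r \<in> {0..T}"
  shows "((\<lambda>s. - \<xi> s i + (1 - \<alpha> s i) * mean_state N (\<xi> s)) has_integral (\<xi> r i - \<xi> 0 i)) {0..r}"
  using assms by (auto simp: is_trajectory_def)

lemma trajectory_continuous:
  assumes "is_trajectory N T x0 \<alpha> \<xi>" "i < N"
  shows "continuous_on {0..T} (\<lambda>t. \<xi> t i)"
  using assms by (auto simp: is_trajectory_def)

lemma continuous_on_mean_state:
  assumes "\<And>i. i < N \<Longrightarrow> continuous_on S (\<lambda>t. \<xi> t i)"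
  shows "continuous_on S (\<lambda>t. mean_state N (\<xi> t))"
  unfolding mean_state_def divide_inverse using assms by (intro continuous_intros) auto

lemma mean_state_trajectory:
  assumes N1: "N \<ge> 1" and sum1: "\<forall>t\<in>{0..T}. (\<Sum>i<N. \<alpha> t i) = 1"
    and tr: "is_trajectory N T x0 \<alpha> \<xi>" and t: "t \<in> {0..T}"
  shows "mean_state N (\<xi> t) = mean_state N x0 * exp (- t / real N)"
proof -
  define g where "g r = mean_state N (\<xi> r)" for r
  have Npos: "real N > 0" using N1 by auto
  have "((\<lambda>s. - 1 / real N * g s) has_integral (g r - g 0)) {0..r}" if r: "r \<in> {0..T}" for r
  proof -
    have "((\<lambda>s. \<Sum>i<N. - \<xi> s i + (1 - \<alpha> s i) * g s) has_integral (\<Sum>i<N. \<xi> r i - \<xi> 0 i)) {0..r}"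
      unfolding g_def using trajectory_has_integral[OF tr _ r] by (intro has_integral_sum) auto
    then have "((\<lambda>s. 1 / real N * (\<Sum>i<N. - \<xi> s i + (1 - \<alpha> s i) * g s))
        has_integral 1 / real N * (\<Sum>i<N. \<xi> r i - \<xi> 0 i)) {0..r}"
      by (rule has_integral_mult_right)
    moreover have "1 / real N * (\<Sum>i<N. \<xi> r i - \<xi> 0 i) = g r - g 0"
      by (simp add: g_def mean_state_def sum_subtractf diff_divide_distrib)
    ultimately have "((\<lambda>s. 1 / real N * (\<Sum>i<N. - \<xi> s i + (1 - \<alpha> s i) * g s))
        has_integral (g r - g 0)) {0..r}" by simp
    then show ?thesis
    proof (rule has_integral_eq[rotated])
      fix s assume "s \<in> {0..r}"
      then have "(\<Sum>i<N. \<alpha> s i) = 1" using sum1 r by auto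
      then have "(\<Sum>i<N. - \<xi> s i + (1 - \<alpha> s i) * g s) = - (\<Sum>i<N. \<xi> s i) + (real N - 1) * g s"
        by (simp add: sum.distrib sum_subtractf sum_distrib_right[symmetric] sum_negf)
      also have "(\<Sum>i<N. \<xi> s i) = real N * g s" using Npos by (simp add: g_def mean_state_def)
      finally show "1 / real N * (\<Sum>i<N. - \<xi> s i + (1 - \<alpha> s i) * g s) = - 1 / real N * g s"
        using Npos by (simp add: field_simps)
    qed
  qed
  moreover have "continuous_on {0..T} g"
    unfolding g_def using trajectory_continuous[OF tr] by (rule continuous_on_mean_state)
  ultimately have "g t = g 0 * exp (- 1 / real N * (t - 0))"
    using integral_equation_exp[of 0 T g "- 1 / real N" t] t by blast
  moreover have "g 0 = mean_state N x0" using tr by (simp add: g_def mean_state_def is_trajectory_def)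
  ultimately show ?thesis by (simp add: g_def)
qed

section \<open>Comparison with an arbitrary competitor\<close>

text \<open>Once maximal, a component stays maximal: after the last time \<open>i\<close> were maximal it would
  receive no control, so \<open>\<xi>\<^sub>i - \<xi>\<^sub>j\<close> would satisfy \<open>f' \<ge> -f\<close> and remain nonnegative.\<close>

lemma max_set_persists:
  assumes N1: "N \<ge> 1" and tr: "is_trajectory N T x0 \<alpha> \<xi>" and fb: "is_max_feedback N T \<alpha> \<xi>"
    and mpos: "\<forall>s\<in>{0..T}. mean_state N (\<xi> s) \<ge> 0"
    and st: "0 \<le> s" "s \<le> t" "t \<le> T" and i: "i \<in> max_set N (\<xi> s)"
  shows "i \<in> max_set N (\<xi> t)"
proof (rule ccontr)
  assume nt: "i \<notin> max_set N (\<xi> t)"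
  have iN: "i < N" using i max_set_iff[OF N1] by auto
  have \<alpha>_nonneg: "\<alpha> x j \<ge> 0" if "x \<in> {0..T}" "j < N" for x j
    using fb that max_feedback_nonneg by (simp add: is_max_feedback_iff)
  define S where "S = (\<Inter>j\<in>{..<N}. {0..T} \<inter> (\<lambda>x. \<xi> x i - \<xi> x j) -` {0..})"
  have cl: "closed S" unfolding S_def using trajectory_continuous[OF tr] iN
    by (intro closed_INT ballI continuous_closed_preimage continuous_intros) auto
  have memS: "x \<in> S \<longleftrightarrow> x \<in> {0..T} \<and> i \<in> max_set N (\<xi> x)" for x
    using N1 iN by (auto simp: S_def max_set_iff[OF N1])
  obtain r0 where r0: "s \<le> r0" "r0 < t" "r0 \<in> S" "\<And>x. r0 < x \<Longrightarrow> x \<le> t \<Longrightarrow> x \<notin> S"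
    using last_point_in_closed[OF cl, of s t] memS i st nt by auto
  have \<alpha>i_zero: "\<alpha> x i = 0" if "r0 < x" "x \<le> t" for x
  proof -
    have "x \<in> {0..T}" using that r0 st by auto
    then show ?thesis using r0(4)[OF that] memS fb iN by (auto simp: is_max_feedback_def)
  qed
  have "\<xi> t j \<le> \<xi> t i" if jN: "j < N" for j
  proof -
    define f where "f x = \<xi> x i - \<xi> x j" for x
    define p where "p x = (\<alpha> x j - \<alpha> x i) * mean_state N (\<xi> x)" for x
    have sub: "{r0..t} \<subseteq> {0..T}" using r0 st by auto
    have "continuous_on {r0..t} f" unfolding f_def
      using trajectory_continuous[OF tr iN] trajectory_continuous[OF tr jN]
      by (intro continuous_intros) (auto intro: continuous_on_subset[OF _ sub])
    moreover have "f r0 \<ge> 0" using r0(3) jN memS max_set_iff[OF N1] by (auto simp: f_def)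
    moreover have "\<forall>r\<in>{r0..t}. ((\<lambda>s. - f s + p s) has_integral (f r - f r0)) {r0..r}"
    proof
      fix r assume r: "r \<in> {r0..t}"
      let ?g = "\<lambda>s. (- \<xi> s i + (1 - \<alpha> s i) * mean_state N (\<xi> s))
        - (- \<xi> s j + (1 - \<alpha> s j) * mean_state N (\<xi> s))"
      have on_r: "(?g has_integral ((\<xi> r i - \<xi> 0 i) - (\<xi> r j - \<xi> 0 j))) {0..r}"
        using r r0 st by (intro has_integral_diff trajectory_has_integral[OF tr]) (auto simp: iN jN)
      have on_r0: "(?g has_integral ((\<xi> r0 i - \<xi> 0 i) - (\<xi> r0 j - \<xi> 0 j))) {0..r0}"
        using r r0 st by (intro has_integral_diff trajectory_has_integral[OF tr]) (auto simp: iN jN)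
      have "(?g has_integral (f r - f r0)) {r0..r}"
        using has_integral_interval_diff[OF on_r on_r0] r r0 st by (simp add: f_def algebra_simps)
      then show "((\<lambda>s. - f s + p s) has_integral (f r - f r0)) {r0..r}"
        by (rule has_integral_eq[rotated]) (simp add: f_def p_def algebra_simps)
    qed
    moreover have "\<forall>x\<in>{r0<..t}. p x \<ge> 0"
      using \<alpha>i_zero \<alpha>_nonneg mpos jN sub by (auto simp: p_def)
    ultimately have "f t \<ge> 0" using integral_equation_nonneg[of r0 t f p t] r0 by auto
    then show ?thesis by (simp add: f_def)
  qed
  then show False using nt max_set_iff[OF N1] iN by auto
qed

lemma sum_weighted_max_feedback:
  assumes N1: "N \<ge> 1" and tr: "is_trajectory N T x0 \<alpha> \<xi>" and fb: "is_max_feedback N T \<alpha> \<xi>"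
    and mpos: "\<forall>s\<in>{0..T}. mean_state N (\<xi> s) \<ge> 0"
    and st: "0 \<le> s" "s \<le> t" "t \<le> T" and i0: "i0 \<in> max_set N (\<xi> t)"
  shows "(\<Sum>i<N. \<xi> t i * \<alpha> s i) = \<xi> t i0"
proof -
  have "(\<Sum>i<N. \<xi> t i * \<alpha> s i) = (\<Sum>i<N. \<xi> t i0 * \<alpha> s i)"
  proof (rule sum.cong)
    fix i assume i: "i \<in> {..<N}"
    show "\<xi> t i * \<alpha> s i = \<xi> t i0 * \<alpha> s i"
    proof (cases "i \<in> max_set N (\<xi> s)")
      case True
      then have "i \<in> max_set N (\<xi> t)" using max_set_persists[OF N1 tr fb mpos st] by blast
      then show ?thesis using i0 max_set_iff[OF N1] by force
    next
      case False
      then show ?thesis using fb st i by (auto simp: is_max_feedback_def)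
    qed
  qed simp
  also have "\<dots> = \<xi> t i0 * (\<Sum>i<N. max_feedback N (\<xi> s) i)"
    unfolding sum_distrib_left using fb st by (intro sum.cong) (auto simp: is_max_feedback_iff)
  also have "\<dots> = \<xi> t i0" by (simp add: sum_max_feedback[OF N1])
  finally show ?thesis .
qed

lemma sum_squares_le_of_cross_nonneg:
  fixes x y :: "'a \<Rightarrow> real"
  assumes "(\<Sum>i\<in>A. x i * (y i - x i)) \<ge> 0"
  shows "(\<Sum>i\<in>A. (x i)\<^sup>2) \<le> (\<Sum>i\<in>A. (y i)\<^sup>2)"
proof -
  have "(\<Sum>i\<in>A. (y i)\<^sup>2) = (\<Sum>i\<in>A. (x i)\<^sup>2 + 2 * (x i * (y i - x i)) + (y i - x i)\<^sup>2)"
    by (rule sum.cong) (simp_all add: power2_eq_square algebra_simps)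
  also have "\<dots> = (\<Sum>i\<in>A. (x i)\<^sup>2) + 2 * (\<Sum>i\<in>A. x i * (y i - x i)) + (\<Sum>i\<in>A. (y i - x i)\<^sup>2)"
    by (simp only: sum.distrib sum_distrib_left)
  finally show ?thesis using assms sum_nonneg[of A "\<lambda>i. (y i - x i)\<^sup>2"] by simp
qed

lemma sum_squares_max_feedback_le:
  assumes N1: "N \<ge> 1" and m0: "mean_state N x0 > 0"
    and adm: "admissible_control N T \<alpha>" and tr: "is_trajectory N T x0 \<alpha> \<xi>"
    and fb: "is_max_feedback N T \<alpha> \<xi>"
    and adm': "admissible_control N T \<beta>" and tr': "is_trajectory N T x0 \<beta> \<eta>"
    and t: "t \<in> {0..T}"
  shows "(\<Sum>i<N. (\<xi> t i)\<^sup>2) \<le> (\<Sum>i<N. (\<eta> t i)\<^sup>2)"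
proof -
  have sum_\<alpha>: "\<forall>s\<in>{0..T}. (\<Sum>i<N. \<alpha> s i) = 1"
    and sum_\<beta>: "\<forall>s\<in>{0..T}. (\<Sum>i<N. \<beta> s i) = 1" and \<beta>_nonneg: "\<forall>s\<in>{0..T}. \<forall>i<N. 0 \<le> \<beta> s i"
    using adm adm' by (auto simp: admissible_control_def)
  define m where "m s = mean_state N x0 * exp (- s / real N)" for s
  have mean_\<xi>: "mean_state N (\<xi> s) = m s" and mean_\<eta>: "mean_state N (\<eta> s) = m s"
    if "s \<in> {0..T}" for s
    using mean_state_trajectory[OF N1 sum_\<alpha> tr that] mean_state_trajectory[OF N1 sum_\<beta> tr' that]
    by (simp_all add: m_def)
  have m_pos: "m s > 0" for s using m0 by (simp add: m_def)
  obtain i0 where i0: "i0 \<in> max_set N (\<xi> t)" using max_set_nonempty[OF N1] by blast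
  define W where "W r = (\<Sum>i<N. \<xi> t i * (\<eta> r i - \<xi> r i))" for r
  define p where "p s = m s * ((\<Sum>i<N. \<xi> t i * \<alpha> s i) - (\<Sum>i<N. \<xi> t i * \<beta> s i))" for s
  have sub: "{0..t} \<subseteq> {0..T}" using t by auto
  have "continuous_on {0..t} W" unfolding W_def
    using trajectory_continuous[OF tr] trajectory_continuous[OF tr']
    by (intro continuous_intros) (auto intro: continuous_on_subset[OF _ sub])
  moreover have "W 0 = 0" using tr tr' by (simp add: W_def is_trajectory_def)
  moreover have "\<forall>r\<in>{0..t}. ((\<lambda>s. - W s + p s) has_integral (W r - W 0)) {0..r}"
  proof
    fix r assume r: "r \<in> {0..t}"
    then have rT: "r \<in> {0..T}" using t by auto
    let ?g = "\<lambda>s. \<Sum>i<N. \<xi> t i * ((- \<eta> s i + (1 - \<beta> s i) * mean_state N (\<eta> s))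
      - (- \<xi> s i + (1 - \<alpha> s i) * mean_state N (\<xi> s)))"
    have "(?g has_integral (\<Sum>i<N. \<xi> t i * ((\<eta> r i - \<eta> 0 i) - (\<xi> r i - \<xi> 0 i)))) {0..r}"
      by (intro has_integral_sum has_integral_mult_right has_integral_diff
          trajectory_has_integral[OF tr' _ rT] trajectory_has_integral[OF tr _ rT]) auto
    moreover have "(\<Sum>i<N. \<xi> t i * ((\<eta> r i - \<eta> 0 i) - (\<xi> r i - \<xi> 0 i))) = W r - W 0"
      by (simp add: W_def sum_subtractf[symmetric] algebra_simps)
    ultimately have "(?g has_integral (W r - W 0)) {0..r}" by simp
    then show "((\<lambda>s. - W s + p s) has_integral (W r - W 0)) {0..r}"
    proof (rule has_integral_eq[rotated])
      fix s assume "s \<in> {0..r}"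
      then have sT: "s \<in> {0..T}" using rT by auto
      have "?g s = (\<Sum>i<N. - (\<xi> t i * (\<eta> s i - \<xi> s i)) + m s * (\<xi> t i * \<alpha> s i)
          - m s * (\<xi> t i * \<beta> s i))"
        using mean_\<xi>[OF sT] mean_\<eta>[OF sT] by (intro sum.cong) (auto simp: algebra_simps)
      also have "\<dots> = - W s + p s"
        by (simp add: W_def p_def sum.distrib sum_subtractf sum_negf sum_distrib_left algebra_simps)
      finally show "?g s = - W s + p s" .
    qed
  qed
  moreover have "\<forall>s\<in>{0<..t}. p s \<ge> 0"
  proof
    fix s assume s: "s \<in> {0<..t}"
    then have sT: "s \<in> {0..T}" using t by auto
    have "(\<Sum>i<N. \<xi> t i * \<alpha> s i) = \<xi> t i0"
      using sum_weighted_max_feedback[OF N1 tr fb _ _ _ _ i0] mean_\<xi> m_pos s t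
      by (simp add: less_imp_le)
    moreover have "(\<Sum>i<N. \<xi> t i * \<beta> s i) \<le> (\<Sum>i<N. \<xi> t i0 * \<beta> s i)"
      using i0 \<beta>_nonneg sT max_set_iff[OF N1] by (intro sum_mono mult_right_mono) auto
    moreover have "(\<Sum>i<N. \<xi> t i0 * \<beta> s i) = \<xi> t i0"
      using sum_\<beta> sT by (simp add: sum_distrib_left[symmetric])
    ultimately show "p s \<ge> 0" using m_pos[of s] by (simp add: p_def)
  qed
  ultimately have "W t \<ge> 0" using integral_equation_nonneg[of 0 t W p t] t by auto
  then show ?thesis unfolding W_def by (rule sum_squares_le_of_cross_nonneg)
qed

lemma variance_cost_max_feedback_le:
  assumes "N \<ge> 1" and "mean_state N x0 > 0"
    and "admissible_control N T \<alpha>" and "is_trajectory N T x0 \<alpha> \<xi>" and "is_max_feedback N T \<alpha> \<xi>"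
    and "admissible_control N T \<beta>" and "is_trajectory N T x0 \<beta> \<eta>"
  shows "variance_cost N T \<xi> \<le> variance_cost N T \<eta>"
  unfolding variance_cost_def
proof (rule integral_le)
  show "(\<lambda>t. (\<Sum>i<N. (\<xi> t i)\<^sup>2) / real N) integrable_on {0..T}"
    and "(\<lambda>t. (\<Sum>i<N. (\<eta> t i)\<^sup>2) / real N) integrable_on {0..T}"
    using trajectory_continuous[OF assms(4)] trajectory_continuous[OF assms(7)] assms(1)
    by (auto intro!: integrable_continuous_interval continuous_intros)
  show "(\<Sum>i<N. (\<xi> t i)\<^sup>2) / real N \<le> (\<Sum>i<N. (\<eta> t i)\<^sup>2) / real N" if "t \<in> {0..T}" for t
    using sum_squares_max_feedback_le[OF assms that] by (simp add: divide_right_mono)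
qed

section \<open>An explicit max-feedback trajectory\<close>

definition max_feedback_field :: "nat \<Rightarrow> (nat \<Rightarrow> real) \<Rightarrow> nat \<Rightarrow> real" where
  "max_feedback_field N x i = - x i + (1 - max_feedback N x i) * mean_state N x"

definition integral_solution :: "nat \<Rightarrow> ((nat \<Rightarrow> real) \<Rightarrow> nat \<Rightarrow> real) \<Rightarrow> real \<Rightarrow> real
    \<Rightarrow> (nat \<Rightarrow> real) \<Rightarrow> (real \<Rightarrow> nat \<Rightarrow> real) \<Rightarrow> bool" where
  "integral_solution N V t0 T y \<xi> \<longleftrightarrow>
     (\<forall>i<N. \<xi> t0 i = y i \<and> continuous_on {t0..T} (\<lambda>t. \<xi> t i) \<and>
        (\<forall>t\<in>{t0..T}. ((\<lambda>s. V (\<xi> s) i) has_integral (\<xi> t i - \<xi> t0 i)) {t0..t}))"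

lemma integral_solution_append:
  assumes sol1: "integral_solution N V t0 \<tau> y \<xi>\<^sub>1" and sol2: "integral_solution N V \<tau> T (\<xi>\<^sub>1 \<tau>) \<xi>\<^sub>2"
    and "t0 \<le> \<tau>" "\<tau> \<le> T"
  shows "integral_solution N V t0 T y (\<lambda>t. if t \<le> \<tau> then \<xi>\<^sub>1 t else \<xi>\<^sub>2 t)"
  unfolding integral_solution_def
proof (intro allI impI conjI ballI)
  fix i assume i: "i < N"
  let ?\<xi> = "\<lambda>t. if t \<le> \<tau> then \<xi>\<^sub>1 t else \<xi>\<^sub>2 t"
  have init1: "\<xi>\<^sub>1 t0 i = y i" and cont1: "continuous_on {t0..\<tau>} (\<lambda>t. \<xi>\<^sub>1 t i)"
    and int1: "\<And>t. t \<in> {t0..\<tau>} \<Longrightarrow> ((\<lambda>s. V (\<xi>\<^sub>1 s) i) has_integral (\<xi>\<^sub>1 t i - \<xi>\<^sub>1 t0 i)) {t0..t}"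
    using sol1 i by (auto simp: integral_solution_def)
  have init2: "\<xi>\<^sub>2 \<tau> i = \<xi>\<^sub>1 \<tau> i" and cont2: "continuous_on {\<tau>..T} (\<lambda>t. \<xi>\<^sub>2 t i)"
    and int2: "\<And>t. t \<in> {\<tau>..T} \<Longrightarrow> ((\<lambda>s. V (\<xi>\<^sub>2 s) i) has_integral (\<xi>\<^sub>2 t i - \<xi>\<^sub>2 \<tau> i)) {\<tau>..t}"
    using sol2 i by (auto simp: integral_solution_def)
  show "?\<xi> t0 i = y i" using init1 \<open>t0 \<le> \<tau>\<close> by simp
  have "continuous_on {t0..T} (\<lambda>t. if t \<le> \<tau> then \<xi>\<^sub>1 t i else \<xi>\<^sub>2 t i)"
  proof (rule continuous_on_cases_1)
    show "continuous_on {t \<in> {t0..T}. t \<le> \<tau>} (\<lambda>t. \<xi>\<^sub>1 t i)"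
      using cont1 by (rule continuous_on_subset) auto
    show "continuous_on {t \<in> {t0..T}. \<tau> \<le> t} (\<lambda>t. \<xi>\<^sub>2 t i)"
      using cont2 by (rule continuous_on_subset) auto
  qed (use init2 in simp)
  then show "continuous_on {t0..T} (\<lambda>t. ?\<xi> t i)" by (simp only: if_distribR)
  fix t assume t: "t \<in> {t0..T}"
  show "((\<lambda>s. V (?\<xi> s) i) has_integral (?\<xi> t i - ?\<xi> t0 i)) {t0..t}"
  proof (cases "t \<le> \<tau>")
    case True
    have "((\<lambda>s. V (?\<xi> s) i) has_integral (\<xi>\<^sub>1 t i - \<xi>\<^sub>1 t0 i)) {t0..t}"
      by (rule has_integral_eq[rotated, OF int1[of t]]) (use True t in auto)
    then show ?thesis using True \<open>t0 \<le> \<tau>\<close> by simp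
  next
    case False
    have "((\<lambda>s. V (?\<xi> s) i) has_integral (\<xi>\<^sub>1 \<tau> i - \<xi>\<^sub>1 t0 i)) {t0..\<tau>}"
      by (rule has_integral_eq[rotated, OF int1[of \<tau>]]) (use \<open>t0 \<le> \<tau>\<close> in auto)
    moreover have "((\<lambda>s. V (?\<xi> s) i) has_integral (\<xi>\<^sub>2 t i - \<xi>\<^sub>2 \<tau> i)) {\<tau>..t}"
      by (rule has_integral_spike_finite[OF _ _ int2[of t], of "{\<tau>}"]) (use t False in auto)
    ultimately have "((\<lambda>s. V (?\<xi> s) i) has_integral
        (\<xi>\<^sub>1 \<tau> i - \<xi>\<^sub>1 t0 i) + (\<xi>\<^sub>2 t i - \<xi>\<^sub>2 \<tau> i)) {t0..t}"
      using False \<open>t0 \<le> \<tau>\<close> by (intro has_integral_combine) auto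
    then show ?thesis using False \<open>t0 \<le> \<tau>\<close> init2 by simp
  qed
qed

text \<open>While the \<open>k\<close> largest components form a block carrying the control, each of the others
  solves \<open>\<xi>' = -\<xi> + m\<close> with the common mean \<open>m\<close>; \<open>free_level\<close> is the particular solution
  \<open>N/(N - 1) \<cdot> m\<close> of that equation, and \<open>top_state\<close> is the value of the block fixed by the mean.
  For \<open>N = 1\<close> the quotient \<open>N/(N - 1)\<close> is \<open>0\<close>, but then there are no free components.\<close>

definition mean_decay :: "nat \<Rightarrow> real \<Rightarrow> (nat \<Rightarrow> real) \<Rightarrow> real \<Rightarrow> real" where
  "mean_decay N t0 y t = mean_state N y * exp (- (t - t0) / real N)"

definition free_level :: "nat \<Rightarrow> real \<Rightarrow> (nat \<Rightarrow> real) \<Rightarrow> real \<Rightarrow> real" where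
  "free_level N t0 y t = real N / (real N - 1) * mean_decay N t0 y t"

definition free_state :: "nat \<Rightarrow> real \<Rightarrow> (nat \<Rightarrow> real) \<Rightarrow> nat \<Rightarrow> real \<Rightarrow> real" where
  "free_state N t0 y j t = exp (- (t - t0)) * (y j - free_level N t0 y t0) + free_level N t0 y t"

definition top_state :: "nat \<Rightarrow> real \<Rightarrow> (nat \<Rightarrow> real) \<Rightarrow> nat \<Rightarrow> real \<Rightarrow> real" where
  "top_state N t0 y k t = (real N * mean_decay N t0 y t
      - exp (- (t - t0)) * (\<Sum>j\<in>{k..<N}. y j - free_level N t0 y t0)
      - real (N - k) * free_level N t0 y t) / real k"

definition block_state :: "nat \<Rightarrow> real \<Rightarrow> (nat \<Rightarrow> real) \<Rightarrow> nat \<Rightarrow> real \<Rightarrow> nat \<Rightarrow> real" where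
  "block_state N t0 y k t i = (if i < k then top_state N t0 y k t else free_state N t0 y i t)"

lemma continuous_on_mean_decay: "continuous_on S (mean_decay N t0 y)"
  unfolding mean_decay_def divide_inverse by (intro continuous_intros)

lemma continuous_on_free_level: "continuous_on S (free_level N t0 y)"
  unfolding free_level_def by (intro continuous_on_mult_left continuous_on_mean_decay)

lemma mean_decay_has_derivative:
  assumes "N \<ge> 1" and "D = - mean_decay N t0 y t / real N"
  shows "(mean_decay N t0 y has_real_derivative D) (at t within S)"
  unfolding assms(2) mean_decay_def[abs_def] using assms(1)
  by (auto intro!: derivative_eq_intros simp: field_simps)

lemma free_level_has_derivative:
  assumes "N \<ge> 1" and "D = real N / (real N - 1) * (- mean_decay N t0 y t / real N)"
  shows "(free_level N t0 y has_real_derivative D) (at t within S)"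
  unfolding free_level_def[abs_def] assms(2) by (intro DERIV_cmult mean_decay_has_derivative[OF assms(1) refl])

lemma free_state_mono: "y j \<le> y k \<Longrightarrow> free_state N t0 y j t \<le> free_state N t0 y k t"
  by (simp add: free_state_def)

context
  fixes N :: nat and t0 :: real and y :: "nat \<Rightarrow> real" and k :: nat
  assumes N1: "N \<ge> 1" and k1: "1 \<le> k" and kN: "k \<le> N"
begin

lemma block_state_init:
  assumes top: "\<forall>i<k. y i = y 0" and i: "i < N"
  shows "block_state N t0 y k t0 i = y i"
proof -
  have split: "(\<Sum>j<N. y j) = (\<Sum>j<k. y j) + (\<Sum>j\<in>{k..<N}. y j)"
    using kN by (simp add: atLeast0LessThan[symmetric] sum.atLeastLessThan_concat)
  have "(\<Sum>j<k. y j) = (\<Sum>j<k. y 0)" by (rule sum.cong) (simp, metis lessThan_iff top)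
  then have "(\<Sum>j<k. y j) = real k * y 0" by simp
  then have "top_state N t0 y k t0 = y 0"
    using split k1 N1 kN
    by (simp add: top_state_def mean_decay_def mean_state_def sum_subtractf of_nat_diff field_simps)
  then show ?thesis using i top[rule_format, of i] by (cases "i < k") (auto simp: block_state_def free_state_def)
qed

lemma mean_state_block_state: "mean_state N (block_state N t0 y k t) = mean_decay N t0 y t"
proof -
  have "(\<Sum>i<N. block_state N t0 y k t i)
      = (\<Sum>i<k. block_state N t0 y k t i) + (\<Sum>i\<in>{k..<N}. block_state N t0 y k t i)"
    using kN by (simp add: atLeast0LessThan[symmetric] sum.atLeastLessThan_concat)
  also have "(\<Sum>i<k. block_state N t0 y k t i) = real k * top_state N t0 y k t"
    by (simp add: block_state_def)
  also have "(\<Sum>i\<in>{k..<N}. block_state N t0 y k t i) = (\<Sum>i\<in>{k..<N}. free_state N t0 y i t)"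
    by (simp add: block_state_def)
  also have "\<dots> = exp (- (t - t0)) * (\<Sum>j\<in>{k..<N}. y j - free_level N t0 y t0)
      + real (N - k) * free_level N t0 y t"
    by (simp add: free_state_def sum.distrib sum_distrib_left)
  finally show ?thesis using k1 N1 by (simp add: mean_state_def top_state_def field_simps)
qed

lemma max_set_block_state:
  assumes sorted: "\<forall>i j. i \<le> j \<and> j < N \<longrightarrow> y j \<le> y i"
    and gap: "k < N \<longrightarrow> free_state N t0 y k t < top_state N t0 y k t"
  shows "max_set N (block_state N t0 y k t) = {..<k}"
proof -
  have free_le: "free_state N t0 y j t \<le> free_state N t0 y k t" if "k \<le> j" "j < N" for j
    using sorted that by (intro free_state_mono) blast
  show ?thesis
  proof (intro set_eqI iffI)
    fix i assume "i \<in> max_set N (block_state N t0 y k t)"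
    then have i: "i < N" "block_state N t0 y k t 0 \<le> block_state N t0 y k t i"
      using max_set_iff[OF N1] N1 by auto
    show "i \<in> {..<k}"
    proof (rule ccontr)
      assume "i \<notin> {..<k}"
      then have "k \<le> i" "k < N" using i by auto
      then show False using i k1 free_le[of i] gap by (simp add: block_state_def)
    qed
  next
    fix i assume i: "i \<in> {..<k}"
    have "block_state N t0 y k t j \<le> top_state N t0 y k t" if "j < N" for j
    proof (cases "j < k")
      case False
      then show ?thesis using free_le[of j] gap that by (simp add: block_state_def)
    qed (simp add: block_state_def)
    then show "i \<in> max_set N (block_state N t0 y k t)"
      using i kN max_set_iff[OF N1] by (auto simp: block_state_def)
  qed
qed

lemma block_state_sorted:
  assumes sorted: "\<forall>i j. i \<le> j \<and> j < N \<longrightarrow> y j \<le> y i"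
    and gap: "k < N \<longrightarrow> free_state N t0 y k t \<le> top_state N t0 y k t"
  shows "\<forall>i j. i \<le> j \<and> j < N \<longrightarrow> block_state N t0 y k t j \<le> block_state N t0 y k t i"
proof (intro allI impI)
  fix i j assume ij: "i \<le> j \<and> j < N"
  show "block_state N t0 y k t j \<le> block_state N t0 y k t i"
  proof (cases "j < k")
    case False
    then have "free_state N t0 y j t \<le> free_state N t0 y (max i k) t"
      using sorted ij by (intro free_state_mono) auto
    then show ?thesis using gap False ij by (cases "i < k") (auto simp: block_state_def max_def)
  qed (use ij in \<open>simp add: block_state_def\<close>)
qed

lemma continuous_on_block_state: "continuous_on S (\<lambda>t. block_state N t0 y k t i)"
proof (cases "i < k")
  case True
  then show ?thesis unfolding block_state_def top_state_def using k1
    by (simp only: if_True) (intro continuous_intros continuous_on_mean_decay continuous_on_free_level; simp)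
next
  case False
  then show ?thesis unfolding block_state_def free_state_def
    by (simp only: if_False) (intro continuous_intros continuous_on_free_level)
qed

lemma block_state_has_derivative:
  assumes i: "i < N"
  shows "((\<lambda>t. block_state N t0 y k t i) has_real_derivative
     - block_state N t0 y k t i + (1 - (if i < k then 1 / real k else 0)) * mean_decay N t0 y t) (at t)"
proof (cases "i < k")
  case True
  let ?c = "\<Sum>j\<in>{k..<N}. y j - free_level N t0 y t0"
  have "((\<lambda>t. top_state N t0 y k t) has_real_derivative
     (real N * (- mean_decay N t0 y t / real N) - (- exp (- (t - t0)) * ?c)
      - real (N - k) * (real N / (real N - 1) * (- mean_decay N t0 y t / real N))) / real k) (at t)"
    unfolding top_state_def using k1
    by (auto intro!: derivative_eq_intros mean_decay_has_derivative[OF N1] free_level_has_derivative[OF N1])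
  moreover have "(real N * (- mean_decay N t0 y t / real N) - (- exp (- (t - t0)) * ?c)
      - real (N - k) * (real N / (real N - 1) * (- mean_decay N t0 y t / real N))) / real k
    = - top_state N t0 y k t + (1 - 1 / real k) * mean_decay N t0 y t"
  proof (cases "N = 1")
    case True
    then have "k = 1" using k1 kN by auto
    then show ?thesis using True by (simp add: top_state_def)
  next
    case False
    then have "real N - 1 > 0" using N1 by auto
    then show ?thesis using k1 kN by (simp add: top_state_def free_level_def of_nat_diff field_simps)
  qed
  ultimately show ?thesis using True by (simp add: block_state_def)
next
  case False
  then have N2: "real N - 1 > 0" using i k1 by auto
  let ?D = "- exp (- (t - t0)) * (y i - free_level N t0 y t0)
    + real N / (real N - 1) * (- mean_decay N t0 y t / real N)"
  have "((\<lambda>t. free_state N t0 y i t) has_real_derivative ?D) (at t)"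
    unfolding free_state_def using N1
    by (auto intro!: derivative_eq_intros free_level_has_derivative[OF N1])
  moreover have "?D = - free_state N t0 y i t + mean_decay N t0 y t"
  proof -
    have "real N / (real N - 1) * (- s / real N) = s - real N / (real N - 1) * s" for s
      using N2 by (simp add: field_simps)
    then show ?thesis unfolding free_state_def free_level_def by simp
  qed
  ultimately show ?thesis using False by (simp add: block_state_def)
qed

lemma block_state_integral_solution:
  assumes sorted: "\<forall>i j. i \<le> j \<and> j < N \<longrightarrow> y j \<le> y i" and top: "\<forall>i<k. y i = y 0"
    and "t0 \<le> t1"
    and gap: "\<forall>x\<in>{t0<..<t1}. k < N \<longrightarrow> free_state N t0 y k x < top_state N t0 y k x"
  shows "integral_solution N (max_feedback_field N) t0 t1 y (block_state N t0 y k)"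
  unfolding integral_solution_def
proof (intro allI impI conjI ballI)
  fix i t assume i: "i < N" and t: "t \<in> {t0..t1}"
  show "((\<lambda>s. max_feedback_field N (block_state N t0 y k s) i) has_integral
      (block_state N t0 y k t i - block_state N t0 y k t0 i)) {t0..t}"
  proof (rule fundamental_theorem_of_calculus_interior)
    fix x assume x: "x \<in> {t0<..<t}"
    then have "max_set N (block_state N t0 y k x) = {..<k}"
      using max_set_block_state[OF sorted] gap t by auto
    then have "max_feedback N (block_state N t0 y k x) i = (if i < k then 1 / real k else 0)"
      by (simp add: max_feedback_def)
    then show "((\<lambda>s. block_state N t0 y k s i) has_vector_derivative
        max_feedback_field N (block_state N t0 y k x) i) (at x)"
      using block_state_has_derivative[OF i, of x]
      by (simp add: max_feedback_field_def mean_state_block_state has_real_derivative_iff_has_vector_derivative)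
  qed (use t continuous_on_block_state in auto)
qed (use block_state_init[OF top] continuous_on_block_state in auto)

end

lemma obtain_top_block:
  fixes y :: "nat \<Rightarrow> real"
  assumes sorted: "\<forall>i j. i \<le> j \<and> j < N \<longrightarrow> y j \<le> y i" and kN: "k \<le> N" and top: "\<forall>i<k. y i = y 0"
  obtains k' where "k \<le> k'" "k' \<le> N" "\<forall>i<k'. y i = y 0" "k' < N \<longrightarrow> y k' < y 0"
proof -
  define A where "A = {i. i \<le> N \<and> (\<forall>j<i. y j = y 0)}"
  have fin: "finite A" unfolding A_def by (rule finite_subset[of _ "{..N}"]) auto
  have kA: "k \<in> A" unfolding A_def using kN top by blast
  define k' where "k' = Max A"
  have k'A: "k' \<in> A" unfolding k'_def using fin kA by (intro Max_in) auto
  have "k \<le> k'" using Max_ge[OF fin kA] by (simp add: k'_def)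
  moreover have "k' \<le> N" and k'top: "\<forall>i<k'. y i = y 0" using k'A unfolding A_def by blast+
  moreover have "y k' < y 0" if lt: "k' < N"
  proof -
    have "Suc k' \<notin> A" using Max_ge[OF fin, of "Suc k'"] unfolding k'_def[symmetric] by linarith
    then obtain j where "j < Suc k'" "y j \<noteq> y 0" using lt unfolding A_def by auto
    then have "y k' \<noteq> y 0" using k'top less_Suc_eq by blast
    moreover have "y k' \<le> y 0" using sorted lt by blast
    ultimately show ?thesis by simp
  qed
  ultimately show ?thesis using that by blast
qed

text \<open>Follow the block of the \<open>k\<close> largest components until the first time the next component
  reaches it, then restart with the larger block; the block size strictly increases.\<close>

lemma max_feedback_integral_solution_exists:
  assumes N1: "N \<ge> 1"
  shows "1 \<le> k \<Longrightarrow> k \<le> N \<Longrightarrow> t0 \<le> T \<Longrightarrow> \<forall>i j. i \<le> j \<and> j < N \<longrightarrow> y j \<le> y i \<Longrightarrow>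
    \<forall>i<k. y i = y 0 \<Longrightarrow> (k < N \<longrightarrow> y k < y 0) \<Longrightarrow> mean_state N y > 0 \<Longrightarrow>
    \<exists>\<xi>. integral_solution N (max_feedback_field N) t0 T y \<xi>"
proof (induction "N - k" arbitrary: k t0 y rule: less_induct)
  case less
  note k1 = less.prems(1) and kN = less.prems(2) and tT = less.prems(3) and sorted = less.prems(4)
    and top = less.prems(5) and gap = less.prems(6) and mpos = less.prems(7)
  show ?case
  proof (cases "\<forall>x\<in>{t0..T}. k < N \<longrightarrow> free_state N t0 y k x < top_state N t0 y k x")
    case True
    then show ?thesis using block_state_integral_solution[OF N1 k1 kN sorted top tT] by auto
  next
    case False
    then obtain x1 where x1: "x1 \<in> {t0..T}" "k < N" "top_state N t0 y k x1 \<le> free_state N t0 y k x1"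
      by auto
    define D where "D x = top_state N t0 y k x - free_state N t0 y k x" for x
    have D_block: "D x = block_state N t0 y k x 0 - block_state N t0 y k x k" for x
      using k1 by (simp add: D_def block_state_def)
    have "continuous_on {t0..x1} D"
      unfolding D_block[abs_def] by (intro continuous_intros continuous_on_block_state[OF N1 k1 kN])
    moreover have "D t0 > 0"
      using D_block block_state_init[OF N1 k1 kN top] gap x1(2) k1 by simp
    ultimately obtain \<tau> where \<tau>: "t0 < \<tau>" "\<tau> \<le> x1" "D \<tau> = 0" "\<And>x. t0 \<le> x \<Longrightarrow> x < \<tau> \<Longrightarrow> D x > 0"
      using first_zero[of t0 x1 D] x1 by (auto simp: D_def)
    define y' where "y' = block_state N t0 y k \<tau>"
    have sorted': "\<forall>i j. i \<le> j \<and> j < N \<longrightarrow> y' j \<le> y' i"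
      unfolding y'_def using block_state_sorted[OF N1 k1 kN sorted] \<tau>(3) by (simp add: D_def)
    have top': "\<forall>i<Suc k. y' i = y' 0"
    proof (intro allI impI)
      fix i assume "i < Suc k"
      then consider "i < k" | "i = k" by linarith
      then show "y' i = y' 0"
        using \<tau>(3) k1 by cases (simp_all add: y'_def block_state_def D_def)
    qed
    have "Suc k \<le> N" using x1(2) by simp
    then obtain k' where k': "Suc k \<le> k'" "k' \<le> N" "\<forall>i<k'. y' i = y' 0" "k' < N \<longrightarrow> y' k' < y' 0"
      by (rule obtain_top_block[OF sorted' _ top'])
    have "mean_state N y' = mean_decay N t0 y \<tau>"
      unfolding y'_def by (rule mean_state_block_state[OF N1 k1 kN])
    then have mpos': "mean_state N y' > 0" using mpos by (simp add: mean_decay_def)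
    have "N - k' < N - k" "1 \<le> k'" and \<tau>T: "\<tau> \<le> T" using k'(1,2) x1(1) \<tau>(2) by auto
    from less.hyps[OF this(1,2) k'(2) \<tau>T sorted' k'(3,4) mpos']
    obtain \<xi>\<^sub>2 where sol2: "integral_solution N (max_feedback_field N) \<tau> T y' \<xi>\<^sub>2" by blast
    have "\<forall>x\<in>{t0<..<\<tau>}. k < N \<longrightarrow> free_state N t0 y k x < top_state N t0 y k x"
      using \<tau>(4) by (auto simp: D_def)
    then have sol1: "integral_solution N (max_feedback_field N) t0 \<tau> y (block_state N t0 y k)"
      using \<tau>(1) by (intro block_state_integral_solution[OF N1 k1 kN sorted top]) auto
    show ?thesis
      using integral_solution_append[OF sol1 sol2[unfolded y'_def]] \<tau>(1) \<tau>T by auto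
  qed
qed

text \<open>The control is recovered from the trajectory as \<open>\<alpha>\<^sub>i = (\<alpha>\<^sub>i m) / m\<close>: the state equation makes
  \<open>\<alpha>\<^sub>i m\<close> integrable, and the mean \<open>m\<close> is continuous and positive.\<close>

lemma trajectory_control_measurable:
  assumes N1: "N \<ge> 1" and T: "T \<ge> 0" and sum1: "\<forall>t\<in>{0..T}. (\<Sum>i<N. \<alpha> t i) = 1"
    and tr: "is_trajectory N T x0 \<alpha> \<xi>" and m0: "mean_state N x0 > 0" and i: "i < N"
  shows "(\<lambda>t. \<alpha> t i) measurable_on {0..T}"
proof -
  define g where "g s = mean_state N (\<xi> s)" for s
  have gc: "continuous_on {0..T} g"
    unfolding g_def using trajectory_continuous[OF tr] by (rule continuous_on_mean_state)
  have gpos: "g s > 0" if "s \<in> {0..T}" for s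
    using mean_state_trajectory[OF N1 sum1 tr that] m0 by (simp add: g_def)
  have "(\<lambda>s. - \<xi> s i + g s) integrable_on {0..T}"
    using trajectory_continuous[OF tr i] gc by (intro integrable_continuous_interval continuous_intros)
  moreover have "(\<lambda>s. - \<xi> s i + (1 - \<alpha> s i) * g s) integrable_on {0..T}"
    using trajectory_has_integral[OF tr i, of T] T unfolding g_def by (auto intro: has_integral_integrable)
  ultimately have "(\<lambda>s. (- \<xi> s i + g s) - (- \<xi> s i + (1 - \<alpha> s i) * g s)) integrable_on {0..T}"
    by (rule integrable_diff)
  moreover have "(\<lambda>s. (- \<xi> s i + g s) - (- \<xi> s i + (1 - \<alpha> s i) * g s)) = (\<lambda>s. \<alpha> s i * g s)"
    by (simp add: algebra_simps)
  ultimately have "(\<lambda>s. \<alpha> s i * g s) integrable_on {0..T}" by simp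
  then have "(\<lambda>s. \<alpha> s i * g s) \<in> borel_measurable (lebesgue_on {0..T})"
    by (rule integrable_imp_measurable)
  moreover have "continuous_on {0..T} (\<lambda>s. 1 / g s)"
    using gc gpos by (intro continuous_intros) force+
  then have "(\<lambda>s. 1 / g s) \<in> borel_measurable (lebesgue_on {0..T})"
    by (rule continuous_imp_measurable_on_sets_lebesgue) simp
  ultimately have "(\<lambda>s. \<alpha> s i * g s * (1 / g s)) \<in> borel_measurable (lebesgue_on {0..T})"
    by (rule borel_measurable_times)
  then have "(\<lambda>s. \<alpha> s i) \<in> borel_measurable (lebesgue_on {0..T})"
  proof (rule measurable_cong[THEN iffD1, rotated])
    show "\<alpha> s i * g s * (1 / g s) = \<alpha> s i" if "s \<in> space (lebesgue_on {0..T})" for s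
      using that gpos[of s] by simp
  qed
  then show ?thesis by (subst measurable_on_iff_borel_measurable) auto
qed

lemma max_feedback_trajectory_exists:
  assumes N1: "N \<ge> 1" and T: "T \<ge> 0" and m0: "mean_state N x0 > 0"
    and sorted: "\<forall>i j. i \<le> j \<and> j < N \<longrightarrow> x0 j \<le> x0 i"
  shows "\<exists>\<alpha> \<xi>. admissible_control N T \<alpha> \<and> is_trajectory N T x0 \<alpha> \<xi> \<and> is_max_feedback N T \<alpha> \<xi>"
proof -
  have "\<forall>i<1. x0 i = x0 0" by simp
  then obtain k where k: "1 \<le> k" "k \<le> N" "\<forall>i<k. x0 i = x0 0" "k < N \<longrightarrow> x0 k < x0 0"
    by (rule obtain_top_block[OF sorted N1])
  from max_feedback_integral_solution_exists[OF N1 k(1,2) T sorted k(3,4) m0]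
  obtain \<xi> where sol: "integral_solution N (max_feedback_field N) 0 T x0 \<xi>" by blast
  define \<alpha> where "\<alpha> t = max_feedback N (\<xi> t)" for t
  have tr: "is_trajectory N T x0 \<alpha> \<xi>"
    using sol unfolding integral_solution_def is_trajectory_def max_feedback_field_def \<alpha>_def by blast
  have sum1: "\<forall>t\<in>{0..T}. (\<Sum>i<N. \<alpha> t i) = 1" by (simp add: \<alpha>_def sum_max_feedback[OF N1])
  have "admissible_control N T \<alpha>"
    unfolding admissible_control_def
    using sum1 trajectory_control_measurable[OF N1 T sum1 tr m0]
    by (simp add: \<alpha>_def max_feedback_nonneg max_feedback_le_1)
  moreover have "is_max_feedback N T \<alpha> \<xi>" by (simp add: is_max_feedback_iff \<alpha>_def)
  ultimately show ?thesis using tr by blast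
qed

lemma max_feedback_optimal:
  assumes "N \<ge> 1" and "mean_state N x0 > 0"
    and "admissible_control N T \<alpha>" and "is_trajectory N T x0 \<alpha> \<xi>" and "is_max_feedback N T \<alpha> \<xi>"
  shows "is_optimal N T x0 \<alpha> \<xi>"
  using assms variance_cost_max_feedback_le[OF assms] by (auto simp: is_optimal_def)

theorem theorem8:
  fixes N :: nat and T :: real and x0 :: "nat \<Rightarrow> real"
  assumes "N \<ge> 1" and "T > 0"
    and "mean_state N x0 > 0"
    and "\<forall>i j. i \<le> j \<and> j < N \<longrightarrow> x0 j \<le> x0 i"
  shows "(\<exists>\<alpha> \<xi>. admissible_control N T \<alpha> \<and> is_trajectory N T x0 \<alpha> \<xi> \<and> is_max_feedback N T \<alpha> \<xi>)
    \<and> (\<forall>\<alpha> \<xi>. admissible_control N T \<alpha> \<and> is_trajectory N T x0 \<alpha> \<xi> \<and> is_max_feedback N T \<alpha> \<xi>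
          \<longrightarrow> is_optimal N T x0 \<alpha> \<xi>)"
  using max_feedback_trajectory_exists[OF assms(1) _ assms(3,4)] max_feedback_optimal[OF assms(1,3)]
    assms(2) by auto

end
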